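(* Let $q\in(0,1)$, $\alpha\in(-1,1)$ and $\beta<1$ real. If $\beta\le\alpha$, then the discrete part $\mu_d$ of the orthogonality measure $\mu$ of the polynomials $p_n^{(\alpha,\beta)}(\cdot;q)$ vanishes.
   Context: The monic polynomials $p_n=p_n^{(\alpha,\beta)}(x;q)$ satisfy $p_{-1}=0$, $p_0=1$, $p_{n+1}(x)=xp_n(x)-\tilde\gamma_{n-1}\tilde\gamma_np_{n-1}(x)$ for $n\in\mathbb{N}_0$, where $\tilde\gamma_n=(1-\alpha q^n)/(1-\beta q^n)$. $\mu$ is the Borel probability measure on $\mathbb{R}$ with $\int p_mp_n\,{\rm d}\mu=\delta_{m,n}\prod_{j=0}^{n-1}\tilde\gamma_j\tilde\gamma_{j+1}$, and $\mu_d$ is its discrete (atomic) part. *)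

theory Defs
  imports "HOL-Probability.Probability"
begin

definition gt :: "real \<Rightarrow> real \<Rightarrow> real \<Rightarrow> nat \<Rightarrow> real" where
  "gt \<alpha> \<beta> q n = (1 - \<alpha> * q ^ n) / (1 - \<beta> * q ^ n)"

text \<open>Monic polynomials p_n^{(alpha,beta)}(x;q) via the three-term recurrence
  (p_{-1} = 0, p_0 = 1, so p_1 = x).\<close>
fun pab :: "real \<Rightarrow> real \<Rightarrow> real \<Rightarrow> nat \<Rightarrow> real \<Rightarrow> real" where
  "pab \<alpha> \<beta> q 0 x = 1"
| "pab \<alpha> \<beta> q (Suc 0) x = x"
| "pab \<alpha> \<beta> q (Suc (Suc n)) x =
     x * pab \<alpha> \<beta> q (Suc n) x - gt \<alpha> \<beta> q n * gt \<alpha> \<beta> q (Suc n) * pab \<alpha> \<beta> q n x"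

definition is_orth_measure :: "real \<Rightarrow> real \<Rightarrow> real \<Rightarrow> real measure \<Rightarrow> bool" where
  "is_orth_measure \<alpha> \<beta> q \<mu> \<longleftrightarrow>
     prob_space \<mu> \<and> sets \<mu> = sets borel \<and>
     (\<forall>m n. integrable \<mu> (\<lambda>x. pab \<alpha> \<beta> q m x * pab \<alpha> \<beta> q n x) \<and>
       (\<integral>x. pab \<alpha> \<beta> q m x * pab \<alpha> \<beta> q n x \<partial>\<mu>) =
         (if m = n then (\<Prod>j<n. gt \<alpha> \<beta> q j * gt \<alpha> \<beta> q (Suc j)) else 0))"

text \<open>The discrete (atomic) part of a measure vanishes iff the measure has no atoms.\<close>
definition discrete_part_vanishes :: "real measure \<Rightarrow> bool" where
  "discrete_part_vanishes \<mu> \<longleftrightarrow> (\<forall>x. emeasure \<mu> {x} = 0)"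

end

theory Submission
  imports Defs
begin

text \<open>
  For \<beta> \<le> \<alpha> the recurrence coefficients A n = gt n * gt (n + 1) lie in (0, 1] and are
  nondecreasing. At a fixed point x this makes the energy
  H n = p (n+1)^2 - x p n p (n+1) + A n p n^2 of the recurrence grow at least like A 0 * N n,
  where N n = (\<Prod>j<n. A j) is the squared norm of p n; hence any two consecutive terms of the
  Christoffel sum \<Sum>n. p n x^2 / N n add up to at least A 0 / (1 + |x|), and the sum diverges.
  On the other hand, integrating the square of the kernel \<Sum>n<K. p n x / N n * p n shows
  \<mu>{x} * \<Sum>n<K. p n x^2 / N n \<le> 1 for every K. So \<mu>{x} = 0.
\<close>

lemma one_minus_mult_pos:
  fixes a t :: real
  assumes "a < 1" "0 \<le> t" "t \<le> 1"
  shows "0 < 1 - a * t"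
proof (cases "a \<le> 0")
  case True
  then show ?thesis using assms mult_nonpos_nonneg[of a t] by linarith
next
  case False
  then have "a * t \<le> a" using assms by (simp add: mult_left_le)
  then show ?thesis using assms by linarith
qed

lemma linear_fraction_antimono:
  fixes \<alpha> \<beta> s t :: real
  assumes "\<beta> \<le> \<alpha>" "\<alpha> < 1" "0 \<le> s" "s \<le> t" "t \<le> 1"
  shows "(1 - \<alpha> * t) / (1 - \<beta> * t) \<le> (1 - \<alpha> * s) / (1 - \<beta> * s)"
proof -
  have "0 < 1 - \<beta> * t" "0 < 1 - \<beta> * s"
    using one_minus_mult_pos[of \<beta> t] one_minus_mult_pos[of \<beta> s] assms by auto
  moreover have "(\<alpha> - \<beta>) * s \<le> (\<alpha> - \<beta>) * t"
    using assms by (simp add: mult_left_mono)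
  then have "(1 - \<alpha> * t) * (1 - \<beta> * s) \<le> (1 - \<alpha> * s) * (1 - \<beta> * t)"
    by (simp add: algebra_simps)
  ultimately show ?thesis by (simp add: divide_simps)
qed

lemma gt_pos:
  assumes "0 \<le> q" "q \<le> 1" "\<alpha> < 1" "\<beta> < 1"
  shows "0 < gt \<alpha> \<beta> q n"
  using one_minus_mult_pos[of \<alpha> "q ^ n"] one_minus_mult_pos[of \<beta> "q ^ n"] assms
  by (simp add: gt_def power_le_one)

lemma gt_le_one:
  assumes "0 \<le> q" "q \<le> 1" "\<beta> \<le> \<alpha>" "\<alpha> < 1"
  shows "gt \<alpha> \<beta> q n \<le> 1"
  using linear_fraction_antimono[OF assms(3,4), of 0 "q ^ n"] assms
  by (simp add: gt_def power_le_one)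

lemma gt_mono:
  assumes "0 \<le> q" "q \<le> 1" "\<beta> \<le> \<alpha>" "\<alpha> < 1"
  shows "gt \<alpha> \<beta> q n \<le> gt \<alpha> \<beta> q (Suc n)"
  using linear_fraction_antimono[OF assms(3,4), of "q ^ Suc n" "q ^ n"] assms
  by (simp add: gt_def power_le_one mult_left_le_one_le)

lemma quadratic_form_le_sum_squares:
  fixes u v x a :: real
  assumes "a \<le> 1"
  shows "v\<^sup>2 - x * u * v + a * u\<^sup>2 \<le> (1 + \<bar>x\<bar>) * (u\<^sup>2 + v\<^sup>2)"
proof -
  have "2 * \<bar>u\<bar> * \<bar>v\<bar> \<le> u\<^sup>2 + v\<^sup>2"
    using sum_squares_bound[of "\<bar>u\<bar>" "\<bar>v\<bar>"] by simp
  then have "\<bar>u * v\<bar> \<le> u\<^sup>2 + v\<^sup>2"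
    unfolding abs_mult using mult_nonneg_nonneg[OF abs_ge_zero abs_ge_zero, of u v] by linarith
  then have "\<bar>x * u * v\<bar> \<le> \<bar>x\<bar> * (u\<^sup>2 + v\<^sup>2)"
    by (simp add: abs_mult mult.assoc mult_left_mono del: abs_mult_self_eq)
  moreover have "a * u\<^sup>2 \<le> u\<^sup>2"
    using mult_right_mono[OF assms, of "u\<^sup>2"] by simp
  ultimately show ?thesis
    by (simp add: algebra_simps)
qed

lemma three_term_energy_ge:
  fixes A p :: "nat \<Rightarrow> real" and x :: real
  assumes p_0: "p 0 = 1" and p_1: "p (Suc 0) = x"
    and p_rec: "\<And>n. p (Suc (Suc n)) = x * p (Suc n) - A n * p n"
    and A_nonneg: "\<And>n. 0 \<le> A n" and A_mono: "\<And>n. A n \<le> A (Suc n)"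
  shows "A 0 * (\<Prod>j<n. A j) \<le> (p (Suc n))\<^sup>2 - x * p n * p (Suc n) + A n * (p n)\<^sup>2"
proof (induction n)
  case 0
  then show ?case by (simp add: p_0 p_1 power2_eq_square)
next
  case (Suc n)
  let ?H = "\<lambda>n. (p (Suc n))\<^sup>2 - x * p n * p (Suc n) + A n * (p n)\<^sup>2"
  have "?H (Suc n) = A n * ?H n + (A (Suc n) - A n) * (p (Suc n))\<^sup>2"
    unfolding p_rec by (simp add: algebra_simps power2_eq_square)
  moreover have "A n * (A 0 * (\<Prod>j<n. A j)) \<le> A n * ?H n"
    using Suc A_nonneg[of n] by (rule mult_left_mono)
  moreover have "0 \<le> (A (Suc n) - A n) * (p (Suc n))\<^sup>2"
    using A_mono[of n] by simp
  ultimately show ?case by (simp add: algebra_simps)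
qed

lemma three_term_christoffel_pair_ge:
  fixes A p :: "nat \<Rightarrow> real" and x :: real
  assumes p_0: "p 0 = 1" and p_1: "p (Suc 0) = x"
    and p_rec: "\<And>n. p (Suc (Suc n)) = x * p (Suc n) - A n * p n"
    and A_pos: "\<And>n. 0 < A n" and A_mono: "\<And>n. A n \<le> A (Suc n)" and A_le_1: "\<And>n. A n \<le> 1"
  shows "A 0 / (1 + \<bar>x\<bar>) \<le> (p n)\<^sup>2 / (\<Prod>j<n. A j) + (p (Suc n))\<^sup>2 / (\<Prod>j<Suc n. A j)"
proof -
  let ?N = "\<lambda>n. \<Prod>j<n. A j"
  have N_pos: "0 < ?N n" for n
    using A_pos by (simp add: prod_pos)
  have "A 0 * ?N n \<le> (1 + \<bar>x\<bar>) * ((p n)\<^sup>2 + (p (Suc n))\<^sup>2)"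
    using three_term_energy_ge[OF p_0 p_1 p_rec less_imp_le[OF A_pos] A_mono, of n]
      quadratic_form_le_sum_squares[OF A_le_1[of n], of "p (Suc n)" x "p n"]
    by linarith
  then have "A 0 / (1 + \<bar>x\<bar>) \<le> ((p n)\<^sup>2 + (p (Suc n))\<^sup>2) / ?N n"
    using N_pos[of n] by (simp add: divide_simps mult.commute)
  also have "\<dots> = (p n)\<^sup>2 / ?N n + (p (Suc n))\<^sup>2 / ?N n"
    by (rule add_divide_distrib)
  also have "\<dots> \<le> (p n)\<^sup>2 / ?N n + (p (Suc n))\<^sup>2 / ?N (Suc n)"
    using N_pos A_pos[of n] A_le_1[of n]
    by (intro add_left_mono divide_left_mono) (simp_all add: mult_left_le)
  finally show ?thesis by simp
qed

lemma measure_singleton_mult_christoffel_sum_le_1: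
  fixes M :: "'a measure" and P :: "nat \<Rightarrow> 'a \<Rightarrow> real" and N :: "nat \<Rightarrow> real"
  assumes P_integrable: "\<And>m n. integrable M (\<lambda>y. P m y * P n y)"
    and P_orth: "\<And>m n. (\<integral>y. P m y * P n y \<partial>M) = (if m = n then N n else 0)"
    and "x \<in> space M"
  shows "measure M {x} * (\<Sum>n<K. (P n x)\<^sup>2 / N n) \<le> 1"
proof -
  define S where "S = (\<Sum>n<K. (P n x)\<^sup>2 / N n)"
  define c where "c n = P n x / N n" for n
  define f where "f y = (\<Sum>n<K. c n * P n y)" for y
  \<comment> \<open>f is chosen so that both its value at x and its squared norm equal S.\<close>
  have f_sq: "(f y)\<^sup>2 = (\<Sum>m<K. \<Sum>n<K. c m * c n * (P m y * P n y))" for y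
    unfolding f_def power2_eq_square sum_product by (simp add: algebra_simps)
  have "integrable M (\<lambda>y. (f y)\<^sup>2)"
    unfolding f_sq by (intro Bochner_Integration.integrable_sum integrable_mult_right P_integrable)
  then have "(\<integral>y. indicator {x} y * (f x)\<^sup>2 \<partial>M) \<le> (\<integral>y. (f y)\<^sup>2 \<partial>M)"
    by (rule integral_mono') (auto simp: indicator_def)
  also have "\<dots> = (\<Sum>m<K. \<Sum>n<K. c m * c n * (if m = n then N n else 0))"
    unfolding f_sq
    by (simp add: Bochner_Integration.integral_sum Bochner_Integration.integrable_sum
        P_integrable P_orth)
  also have "\<dots> = (\<Sum>n<K. c n * c n * N n)"
    by (intro sum.cong refl) (simp add: if_distrib[of "\<lambda>t. _ * t"] sum.delta' cong: if_cong)
  also have "\<dots> = S"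
    unfolding S_def c_def by (intro sum.cong) (simp_all add: power2_eq_square)
  finally have "measure M {x} * (f x)\<^sup>2 \<le> S"
    using \<open>x \<in> space M\<close> by simp
  moreover have "f x = S"
    unfolding f_def S_def c_def by (simp add: power2_eq_square)
  ultimately have "measure M {x} * S\<^sup>2 \<le> S"
    by simp
  then have "measure M {x} * S \<le> 1"
    using mult_right_le_imp_le[of "measure M {x} * S" S 1] mult_nonneg_nonpos[of "measure M {x}" S]
    by (cases "S \<le> 0") (auto simp: power2_eq_square mult.assoc)
  then show ?thesis
    by (simp add: S_def)
qed

lemma sum_pairs_ge:
  fixes T :: "nat \<Rightarrow> real"
  assumes "\<And>n. d \<le> T n + T (Suc n)"
  shows "real K * d \<le> (\<Sum>n<2 * K. T n)"
proof (induction K)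
  case (Suc K)
  have "(\<Sum>n<2 * Suc K. T n) = (\<Sum>n<2 * K. T n) + (T (2 * K) + T (Suc (2 * K)))"
    by simp
  then show ?case using Suc assms[of "2 * K"] by (simp add: algebra_simps)
qed simp

lemma three_term_orthogonality_measure_no_atoms:
  fixes M :: "real measure" and P :: "nat \<Rightarrow> real \<Rightarrow> real" and A :: "nat \<Rightarrow> real"
  assumes "finite_measure M"
    and P_0: "\<And>y. P 0 y = 1" and P_1: "\<And>y. P (Suc 0) y = y"
    and P_rec: "\<And>n y. P (Suc (Suc n)) y = y * P (Suc n) y - A n * P n y"
    and A_pos: "\<And>n. 0 < A n" and A_mono: "\<And>n. A n \<le> A (Suc n)" and A_le_1: "\<And>n. A n \<le> 1"
    and P_integrable: "\<And>m n. integrable M (\<lambda>y. P m y * P n y)"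
    and P_orth: "\<And>m n. (\<integral>y. P m y * P n y \<partial>M) = (if m = n then (\<Prod>j<n. A j) else 0)"
    and "x \<in> space M"
  shows "emeasure M {x} = 0"
proof -
  interpret finite_measure M by fact
  define w where "w = measure M {x}"
  define d where "d = A 0 / (1 + \<bar>x\<bar>)"
  define T where "T n = (P n x)\<^sup>2 / (\<Prod>j<n. A j)" for n
  have "0 < d"
    using A_pos[of 0] by (simp add: d_def)
  have T_pair_ge: "d \<le> T n + T (Suc n)" for n
    unfolding d_def T_def
    by (rule three_term_christoffel_pair_ge) (use P_0 P_1 P_rec A_pos A_mono A_le_1 in auto)
  have w_sum_le: "w * (\<Sum>n<K. T n) \<le> 1" for K
    unfolding w_def T_def
    by (rule measure_singleton_mult_christoffel_sum_le_1[OF P_integrable P_orth \<open>x \<in> space M\<close>])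
  have "w \<le> 0"
  proof (rule ccontr)
    assume "\<not> w \<le> 0"
    then have "0 < w * d"
      using \<open>0 < d\<close> by simp
    obtain K :: nat where "1 / (w * d) < K"
      using reals_Archimedean2 by blast
    then have "1 < w * (real K * d)"
      using \<open>0 < w * d\<close> by (simp add: field_simps)
    also have "\<dots> \<le> w * (\<Sum>n<2 * K. T n)"
      using sum_pairs_ge[of d T, OF T_pair_ge] \<open>\<not> w \<le> 0\<close> by (simp add: mult_left_mono)
    finally show False
      using w_sum_le[of "2 * K"] by simp
  qed
  then show ?thesis
    by (simp add: emeasure_eq_measure w_def measure_le_0_iff)
qed

theorem proposition2p13:
  fixes q \<alpha> \<beta> :: real and \<mu> :: "real measure"
  assumes "0 < q" "q < 1" "-1 < \<alpha>" "\<alpha> < 1" "\<beta> < 1"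
    and "\<beta> \<le> \<alpha>"
    and "is_orth_measure \<alpha> \<beta> q \<mu>"
  shows "discrete_part_vanishes \<mu>"
proof -
  have "prob_space \<mu>" and "sets \<mu> = sets borel"
    and P_integrable: "\<And>m n. integrable \<mu> (\<lambda>x. pab \<alpha> \<beta> q m x * pab \<alpha> \<beta> q n x)"
    and P_orth: "\<And>m n. (\<integral>x. pab \<alpha> \<beta> q m x * pab \<alpha> \<beta> q n x \<partial>\<mu>) =
         (if m = n then (\<Prod>j<n. gt \<alpha> \<beta> q j * gt \<alpha> \<beta> q (Suc j)) else 0)"
    using assms(7) unfolding is_orth_measure_def by auto
  then interpret prob_space \<mu> by simp
  have space_\<mu>: "space \<mu> = UNIV"
    using sets_eq_imp_space_eq[OF \<open>sets \<mu> = sets borel\<close>] by simp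
  note gt_facts = gt_pos[of q \<alpha> \<beta>] gt_le_one[of q \<beta> \<alpha>] gt_mono[of q \<beta> \<alpha>]
  show ?thesis
    unfolding discrete_part_vanishes_def
  proof
    fix x
    show "emeasure \<mu> {x} = 0"
    proof (rule three_term_orthogonality_measure_no_atoms
        [OF finite_measure_axioms _ _ _ _ _ _ P_integrable P_orth])
      show "0 < gt \<alpha> \<beta> q n * gt \<alpha> \<beta> q (Suc n)" for n
        using gt_facts assms by simp
      show "gt \<alpha> \<beta> q n * gt \<alpha> \<beta> q (Suc n) \<le> gt \<alpha> \<beta> q (Suc n) * gt \<alpha> \<beta> q (Suc (Suc n))" for n
        using gt_facts assms by (intro mult_mono) (auto intro: less_imp_le)
      show "gt \<alpha> \<beta> q n * gt \<alpha> \<beta> q (Suc n) \<le> 1" for n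
        using gt_facts assms by (intro mult_le_one) (auto intro: less_imp_le)
    qed (simp_all add: space_\<mu>)
  qed
qed

end
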